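(* Consider the problem $\min_{x\in\mathbb{R}^n} F(x):=f(x)+g(x)$ subject to $Ax=b$, under the setting described in the context, and let $\lambda^*$ be an optimal solution of $\max_{\lambda\in\mathbb{R}^m} d(\lambda)$. Let $\{x^k\}$ and $\{\lambda^k\}$ be generated by the IAL framework described in the context, with a nonnegative tolerance sequence $\{\eta_k\}$ satisfying $\sum_{k=1}^{+\infty}\eta_k<+\infty$. Then $$\delta_k:=d(\lambda^* )-d(\lambda^k)\to 0 \quad\text{and}\quad \|Ax^{k+1}-b\|\to 0 \quad (k\to\infty).$$
   Context: Let $A\in\mathbb{R}^{m\times n}$ and $b\in\mathbb{R}^m$. Let $f:\mathbb{R}^n\to\mathbb{R}$ be convex and differentiable with Lipschitz continuous gradient. Let $g:\mathbb{R}^n\to\mathbb{R}\cup\{+\infty\}$ be a closed proper convex (possibly nonsmooth) function with bounded domain. Fix a penalty parameter $\beta>0$. For $\lambda\in\mathbb{R}^m$, define $$\hat f_\beta(x;\lambda):=f(x)+\langle\lambda,Ax-b\rangle+\tfrac{\beta}{2}\|Ax-b\|^2,\qquad \mathcal{L}_\beta(x;\lambda):=\hat f_\beta(x;\lambda)+g(x),$$ and $d(\lambda):=\min_{x\in\mathbb{R}^n}\mathcal{L}_\beta(x;\lambda)$. Here $\nabla\hat f_\beta(x;\lambda)$ denotes the gradient of $\hat f_\beta$ with respect to $x$. IAL framework: choose $x^1\in\operatorname{dom} g$, $\lambda^1\in\mathbb{R}^m$, and a nonnegative sequence $\{\eta_k\}$. For $k=1,2,\dots$: find a point $x^{k+1}$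 such that $$\max_{x\in\mathbb{R}^n}\Big\{\langle\nabla\hat f_\beta(x^{k+1};\lambda^k),\,x^{k+1}-x\rangle+g(x^{k+1})-g(x)\Big\}\le\eta_k,$$ and then set $\lambda^{k+1}=\lambda^k+\beta(Ax^{k+1}-b)$. The result holds for any sequences produced in this way. *)

theory Defs
  imports "HOL-Analysis.Analysis"
begin

text \<open>The extended-valued g : R^n -> R \<union> {+\<infinity>} is represented by its (effective) domain D
  together with its finite values on D; g is +\<infinity> outside D.\<close>

definition closed_proper_convex :: "('a::real_normed_vector) set \<Rightarrow> ('a \<Rightarrow> real) \<Rightarrow> bool" where
  "closed_proper_convex D g \<longleftrightarrow> D \<noteq> {} \<and> convex D \<and> convex_on D g \<and>
     closed {(x, t). x \<in> D \<and> g x \<le> t}"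

definition fhat :: "(real^'n \<Rightarrow> real) \<Rightarrow> real^'n^'m \<Rightarrow> real^'m \<Rightarrow> real \<Rightarrow> real^'m \<Rightarrow> real^'n \<Rightarrow> real" where
  "fhat f A b \<beta> lam x = f x + lam \<bullet> (A *v x - b) + \<beta> / 2 * (norm (A *v x - b))\<^sup>2"

definition fhat_grad :: "(real^'n \<Rightarrow> real^'n) \<Rightarrow> real^'n^'m \<Rightarrow> real^'m \<Rightarrow> real \<Rightarrow> real^'m \<Rightarrow> real^'n \<Rightarrow> real^'n" where
  "fhat_grad Df A b \<beta> lam x = Df x + transpose A *v (lam + \<beta> *\<^sub>R (A *v x - b))"

definition aug_lag :: "(real^'n \<Rightarrow> real) \<Rightarrow> (real^'n \<Rightarrow> real) \<Rightarrow> real^'n^'m \<Rightarrow> real^'m \<Rightarrow> real \<Rightarrow> real^'m \<Rightarrow> real^'n \<Rightarrow> real" where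
  "aug_lag f g A b \<beta> lam x = fhat f A b \<beta> lam x + g x"

text \<open>d(lambda) = min over x of L_beta(x; lambda); since g = +\<infinity> off D, this is the infimum over D
  (the minimum is attained as D is compact and L_beta is lsc on it).\<close>
definition dual_fun :: "(real^'n \<Rightarrow> real) \<Rightarrow> (real^'n \<Rightarrow> real) \<Rightarrow> (real^'n) set \<Rightarrow> real^'n^'m \<Rightarrow> real^'m \<Rightarrow> real \<Rightarrow> real^'m \<Rightarrow> real" where
  "dual_fun f g D A b \<beta> lam = Inf (aug_lag f g A b \<beta> lam ` D)"

end

theory Submission
  imports Defs
begin

text \<open>With \<open>\<ell>(z; \<mu>) = f z + g z + \<langle>\<mu>, Az - b\<rangle>\<close> the ordinary Lagrangian, convexity of \<open>f\<close> turns
  the inexactness criterion into: \<open>x\<^sup>k\<^sup>+\<^sup>1\<close> minimises \<open>\<ell>(\<cdot>; \<lambda>\<^sup>k\<^sup>+\<^sup>1)\<close> over the domain of \<open>g\<close> up to \<open>\<eta>\<^sub>k\<close>.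
  Comparing \<open>\<L>\<^sub>\<beta>\<close> with \<open>\<ell>\<close> by completing the square then yields, with \<open>r\<^sub>k = Ax\<^sup>k\<^sup>+\<^sup>1 - b\<close>,
  the ascent estimate \<open>\<beta>/2 \<parallel>r\<^sub>k\<parallel>\<^sup>2 \<le> d(\<lambda>\<^sup>k\<^sup>+\<^sup>1) - d(\<lambda>\<^sup>k) + \<eta>\<^sub>k\<close> and the gap estimate
  \<open>d(\<lambda>\<^sup>*) - d(\<lambda>\<^sup>k) \<le> (\<parallel>\<lambda>\<^sup>* - \<lambda>\<^sup>k\<parallel>\<^sup>2 - \<parallel>\<lambda>\<^sup>* - \<lambda>\<^sup>k\<^sup>+\<^sup>1\<parallel>\<^sup>2)/(2\<beta>) + \<eta>\<^sub>k + \<beta>/2 \<parallel>r\<^sub>k\<parallel>\<^sup>2\<close>.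
  Since \<open>d\<close> is bounded by \<open>d(\<lambda>\<^sup>*)\<close> and \<open>\<Sum>\<eta>\<^sub>k < \<infinity>\<close>, both right-hand sides telescope, so
  \<open>\<Sum>\<parallel>r\<^sub>k\<parallel>\<^sup>2\<close> and then \<open>\<Sum>\<delta>\<^sub>k\<close> are finite.\<close>

lemma convex_on_has_derivative_above_tangent:
  fixes f :: "'a::real_inner \<Rightarrow> real"
  assumes convex: "convex_on UNIV f" and deriv: "(f has_derivative (\<lambda>h. f' \<bullet> h)) (at x)"
  shows "f x + f' \<bullet> (z - x) \<le> f z"
proof -
  define \<phi> where "\<phi> t = f (x + t *\<^sub>R (z - x))" for t :: real
  have "convex_on UNIV \<phi>"
  proof (rule convex_onI)
    fix t u v :: real assume "0 < t" "t < 1"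
    have "x + ((1 - t) * u + t * v) *\<^sub>R (z - x)
        = (1 - t) *\<^sub>R (x + u *\<^sub>R (z - x)) + t *\<^sub>R (x + v *\<^sub>R (z - x))"
      by (simp add: algebra_simps)
    then show "\<phi> ((1 - t) *\<^sub>R u + t *\<^sub>R v) \<le> (1 - t) * \<phi> u + t * \<phi> v"
      using convex_onD[OF convex, of t] \<open>0 < t\<close> \<open>t < 1\<close> by (simp add: \<phi>_def)
  qed simp
  have segment: "((\<lambda>t. x + t *\<^sub>R (z - x)) has_derivative (\<lambda>t. t *\<^sub>R (z - x))) (at 0)"
    by (auto intro!: derivative_eq_intros)
  have "(f has_derivative (\<lambda>h. f' \<bullet> h)) (at (x + 0 *\<^sub>R (z - x)))"
    using deriv by simp
  from has_derivative_compose[OF segment this]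
  have "(\<phi> has_derivative (\<lambda>t. f' \<bullet> (t *\<^sub>R (z - x)))) (at 0)"
    by (simp add: \<phi>_def[abs_def])
  then have "(\<phi> has_field_derivative (f' \<bullet> (z - x))) (at 0)"
    unfolding has_field_derivative_def by (rule has_derivative_eq_rhs) (auto simp: fun_eq_iff)
  from convex_on_imp_above_tangent[OF \<open>convex_on UNIV \<phi>\<close> _ _ _ this, of 1]
  show ?thesis by (simp add: \<phi>_def)
qed

lemma inner_plus_half_norm_sq_ge:
  fixes m r :: "'a::real_inner"
  assumes "\<beta> > 0"
  shows "- (norm m)\<^sup>2 / (2 * \<beta>) \<le> m \<bullet> r + \<beta> / 2 * (norm r)\<^sup>2"
proof -
  have "(norm (\<beta> *\<^sub>R r + m))\<^sup>2 = \<beta>\<^sup>2 * (norm r)\<^sup>2 + 2 * \<beta> * (m \<bullet> r) + (norm m)\<^sup>2"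
    by (simp only: power2_norm_eq_inner inner_add_left inner_add_right inner_scaleR_left
        inner_scaleR_right inner_commute[of r m]) (simp add: algebra_simps power2_eq_square)
  then have "(norm (\<beta> *\<^sub>R r + m))\<^sup>2 / (2 * \<beta>) = m \<bullet> r + \<beta> / 2 * (norm r)\<^sup>2 + (norm m)\<^sup>2 / (2 * \<beta>)"
    using assms by (simp add: field_simps power2_eq_square)
  moreover have "0 \<le> (norm (\<beta> *\<^sub>R r + m))\<^sup>2 / (2 * \<beta>)"
    using assms by simp
  ultimately show ?thesis by simp
qed

lemma norm_diff_scaleR_sq_diff:
  fixes \<nu> \<mu> r :: "'a::real_inner"
  assumes "\<beta> > 0"
  shows "((norm (\<nu> - (\<mu> - \<beta> *\<^sub>R r)))\<^sup>2 - (norm (\<nu> - \<mu>))\<^sup>2) / (2 * \<beta>)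
     = (\<nu> - \<mu>) \<bullet> r + \<beta> / 2 * (norm r)\<^sup>2"
proof -
  have "(norm (\<nu> - (\<mu> - \<beta> *\<^sub>R r)))\<^sup>2 = (norm ((\<nu> - \<mu>) + \<beta> *\<^sub>R r))\<^sup>2"
    by (simp add: algebra_simps)
  also have "\<dots> = (norm (\<nu> - \<mu>))\<^sup>2 + 2 * \<beta> * ((\<nu> - \<mu>) \<bullet> r) + \<beta>\<^sup>2 * (norm r)\<^sup>2"
    by (simp only: power2_norm_eq_inner inner_add_left inner_add_right inner_scaleR_left
        inner_scaleR_right inner_commute[of r "\<nu> - \<mu>"]) (simp add: algebra_simps power2_eq_square)
  finally show ?thesis
    using assms by (simp add: field_simps power2_eq_square)
qed

lemma summable_of_telescoping_bound:
  fixes a u e :: "nat \<Rightarrow> real"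
  assumes a_nonneg: "\<And>n. 0 \<le> a n"
    and bound: "\<And>n. a n \<le> u (Suc n) - u n + e n"
    and u_le: "\<And>n. u n \<le> M"
    and e_nonneg: "\<And>n. 0 \<le> e n" and e_summable: "summable e"
  shows "summable a"
proof (rule summableI_nonneg_bounded[OF a_nonneg])
  fix N
  have "(\<Sum>n<N. a n) \<le> (\<Sum>n<N. u (Suc n) - u n) + (\<Sum>n<N. e n)"
    by (simp add: sum.distrib[symmetric] sum_mono bound)
  also have "\<dots> \<le> M - u 0 + suminf e"
    using u_le[of N] sum_le_suminf[OF e_summable, of "{..<N}"] e_nonneg
    by (simp add: sum_lessThan_telescope)
  finally show "(\<Sum>n<N. a n) \<le> M - u 0 + suminf e" .
qed

locale ial_setting =
  fixes f :: "real^'n \<Rightarrow> real" and Df :: "real^'n \<Rightarrow> real^'n"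
    and g :: "real^'n \<Rightarrow> real" and D :: "(real^'n) set"
    and A :: "real^'n^'m" and b :: "real^'m" and \<beta> :: real
  assumes f_convex: "convex_on UNIV f"
    and f_grad: "\<And>z. (f has_derivative (\<lambda>h. Df z \<bullet> h)) (at z)"
    and beta_pos: "\<beta> > 0"
begin

abbreviation L :: "real^'m \<Rightarrow> real^'n \<Rightarrow> real" where
  "L \<equiv> aug_lag f g A b \<beta>"

abbreviation d :: "real^'m \<Rightarrow> real" where
  "d \<equiv> dual_fun f g D A b \<beta>"

definition lagrangian :: "real^'m \<Rightarrow> real^'n \<Rightarrow> real" where
  "lagrangian \<mu> z = f z + g z + \<mu> \<bullet> (A *v z - b)"

lemma aug_lag_eq_lagrangian: "L \<mu> z = lagrangian \<mu> z + \<beta> / 2 * (norm (A *v z - b))\<^sup>2"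
  by (simp add: aug_lag_def fhat_def lagrangian_def)

lemma lagrangian_le_aug_lag: "lagrangian \<mu> z \<le> L \<mu> z"
  using beta_pos by (simp add: aug_lag_eq_lagrangian)

lemma lagrangian_update:
  "lagrangian (\<mu> + \<beta> *\<^sub>R (A *v z - b)) z = lagrangian \<mu> z + \<beta> * (norm (A *v z - b))\<^sup>2"
  by (simp add: lagrangian_def inner_add_left power2_norm_eq_inner)

lemma ial_step_approx_minimizer:
  assumes step: "fhat_grad Df A b \<beta> \<mu> x' \<bullet> (x' - z) + g x' - g z \<le> \<eta>"
    and update: "\<mu>' = \<mu> + \<beta> *\<^sub>R (A *v x' - b)"
  shows "lagrangian \<mu>' x' \<le> lagrangian \<mu>' z + \<eta>"
proof -
  have "fhat_grad Df A b \<beta> \<mu> x' = Df x' + transpose A *v \<mu>'"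
    by (simp add: fhat_grad_def update)
  then have "fhat_grad Df A b \<beta> \<mu> x' \<bullet> (x' - z) = Df x' \<bullet> (x' - z) + \<mu>' \<bullet> (A *v x' - A *v z)"
    by (simp add: inner_add_left dot_lmul_matrix matrix_vector_mult_diff_distrib)
  moreover have "f x' - Df x' \<bullet> (x' - z) \<le> f z"
    using convex_on_has_derivative_above_tangent[OF f_convex f_grad, of x' z]
    by (simp add: inner_diff_right)
  ultimately show ?thesis
    using step by (simp add: lagrangian_def inner_diff_right)
qed

lemma aug_lag_bdd_below:
  assumes "\<And>z. z \<in> D \<Longrightarrow> c \<le> lagrangian \<nu> z"
  shows "bdd_below (L \<mu> ` D)"
proof (rule bdd_belowI2)
  fix z assume "z \<in> D"
  have "L \<mu> z = lagrangian \<nu> z + ((\<mu> - \<nu>) \<bullet> (A *v z - b) + \<beta> / 2 * (norm (A *v z - b))\<^sup>2)"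
    by (simp add: aug_lag_eq_lagrangian lagrangian_def inner_diff_left)
  then show "c - (norm (\<mu> - \<nu>))\<^sup>2 / (2 * \<beta>) \<le> L \<mu> z"
    using assms[OF \<open>z \<in> D\<close>] inner_plus_half_norm_sq_ge[OF beta_pos, of "\<mu> - \<nu>" "A *v z - b"]
    by linarith
qed

text \<open>A single approximate minimiser \<open>x'\<close> already bounds every \<open>L \<nu>\<close> below on \<open>D\<close>, so the
  \<open>Inf\<close> in \<open>d\<close> is a genuine infimum rather than the junk value of an unbounded set.\<close>

context
  fixes x' :: "real^'n" and \<mu> \<mu>' :: "real^'m" and \<eta> :: real
  assumes x'_in: "x' \<in> D"
    and approx_min: "\<And>z. z \<in> D \<Longrightarrow> lagrangian \<mu>' x' \<le> lagrangian \<mu>' z + \<eta>"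
    and update: "\<mu>' = \<mu> + \<beta> *\<^sub>R (A *v x' - b)"
begin

lemma dual_le_aug_lag:
  assumes "z \<in> D"
  shows "d \<nu> \<le> L \<nu> z"
proof -
  have "bdd_below (L \<nu> ` D)"
  proof (rule aug_lag_bdd_below)
    fix y assume "y \<in> D"
    then show "lagrangian \<mu>' x' - \<eta> \<le> lagrangian \<mu>' y"
      using approx_min[of y] by linarith
  qed
  then show ?thesis
    unfolding dual_fun_def using assms by (simp add: cInf_lower)
qed

lemma dual_ge: "(\<And>z. z \<in> D \<Longrightarrow> c \<le> L \<nu> z) \<Longrightarrow> c \<le> d \<nu>"
  unfolding dual_fun_def using x'_in by (auto intro: cInf_greatest)

lemma dual_ascent_step: "\<beta> / 2 * (norm (A *v x' - b))\<^sup>2 \<le> d \<mu>' - d \<mu> + \<eta>"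
proof -
  have "d \<mu> \<le> lagrangian \<mu> x' + \<beta> / 2 * (norm (A *v x' - b))\<^sup>2"
    using dual_le_aug_lag[OF x'_in] by (simp add: aug_lag_eq_lagrangian)
  moreover have "lagrangian \<mu>' x' - \<eta> \<le> d \<mu>'"
  proof (rule dual_ge)
    fix z assume "z \<in> D"
    then show "lagrangian \<mu>' x' - \<eta> \<le> L \<mu>' z"
      using approx_min[OF \<open>z \<in> D\<close>] lagrangian_le_aug_lag[of \<mu>' z] by linarith
  qed
  ultimately show ?thesis
    using lagrangian_update[of \<mu> x'] by (simp add: update)
qed

lemma dual_gap_step:
  "d \<nu> - d \<mu> \<le> ((norm (\<nu> - \<mu>))\<^sup>2 - (norm (\<nu> - \<mu>'))\<^sup>2) / (2 * \<beta>)
     + \<eta> + \<beta> / 2 * (norm (A *v x' - b))\<^sup>2"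
proof -
  let ?r = "A *v x' - b"
  have "\<mu> = \<mu>' - \<beta> *\<^sub>R ?r" by (simp add: update)
  then have "((norm (\<nu> - \<mu>))\<^sup>2 - (norm (\<nu> - \<mu>'))\<^sup>2) / (2 * \<beta>) = (\<nu> - \<mu>') \<bullet> ?r + \<beta> / 2 * (norm ?r)\<^sup>2"
    using norm_diff_scaleR_sq_diff[OF beta_pos] by simp
  moreover have "d \<nu> \<le> lagrangian \<mu>' x' + ((\<nu> - \<mu>') \<bullet> ?r + \<beta> / 2 * (norm ?r)\<^sup>2)"
    using dual_le_aug_lag[OF x'_in, of \<nu>]
    by (simp add: aug_lag_eq_lagrangian lagrangian_def inner_diff_left)
  moreover have "lagrangian \<mu>' x' - \<eta> - \<beta> / 2 * (norm ?r)\<^sup>2 \<le> d \<mu>"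
  proof (rule dual_ge)
    fix z assume "z \<in> D"
    have "L \<mu> z = lagrangian \<mu>' z + ((- \<beta> *\<^sub>R ?r) \<bullet> (A *v z - b) + \<beta> / 2 * (norm (A *v z - b))\<^sup>2)"
      by (simp add: aug_lag_eq_lagrangian lagrangian_def update inner_add_left)
    moreover have "- (norm (- \<beta> *\<^sub>R ?r))\<^sup>2 / (2 * \<beta>) = - \<beta> / 2 * (norm ?r)\<^sup>2"
      using beta_pos by (simp add: power2_eq_square)
    ultimately show "lagrangian \<mu>' x' - \<eta> - \<beta> / 2 * (norm ?r)\<^sup>2 \<le> L \<mu> z"
      using approx_min[OF \<open>z \<in> D\<close>]
        inner_plus_half_norm_sq_ge[OF beta_pos, of "- \<beta> *\<^sub>R ?r" "A *v z - b"]
      by linarith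
  qed
  ultimately show ?thesis by linarith
qed

end

context
  fixes x :: "nat \<Rightarrow> real^'n" and lam :: "nat \<Rightarrow> real^'m" and eta :: "nat \<Rightarrow> real"
    and lamstar :: "real^'m"
  assumes x_in: "\<And>k. x (Suc k) \<in> D"
    and approx_min: "\<And>k z. z \<in> D \<Longrightarrow>
      lagrangian (lam (Suc k)) (x (Suc k)) \<le> lagrangian (lam (Suc k)) z + eta k"
    and update: "\<And>k. lam (Suc k) = lam k + \<beta> *\<^sub>R (A *v x (Suc k) - b)"
    and eta_nonneg: "\<And>k. 0 \<le> eta k" and eta_summable: "summable eta"
    and lamstar_opt: "\<And>\<nu>. d \<nu> \<le> d lamstar"
begin

lemma residual_summable: "summable (\<lambda>k. (norm (A *v x (Suc k) - b))\<^sup>2)"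
proof -
  have "summable (\<lambda>k. \<beta> / 2 * (norm (A *v x (Suc k) - b))\<^sup>2)"
    by (rule summable_of_telescoping_bound[where u = "\<lambda>k. d (lam k)",
          OF _ dual_ascent_step[OF x_in approx_min update] lamstar_opt eta_nonneg eta_summable])
      (use beta_pos in simp)
  then show ?thesis
    using beta_pos by simp
qed

lemma dual_gap_summable: "summable (\<lambda>k. d lamstar - d (lam k))"
proof (rule summable_of_telescoping_bound[where M = 0
      and u = "\<lambda>k. - (norm (lamstar - lam k))\<^sup>2 / (2 * \<beta>)"
      and e = "\<lambda>k. eta k + \<beta> / 2 * (norm (A *v x (Suc k) - b))\<^sup>2"])
  show "d lamstar - d (lam k) \<le> - (norm (lamstar - lam (Suc k)))\<^sup>2 / (2 * \<beta>)
      - - (norm (lamstar - lam k))\<^sup>2 / (2 * \<beta>) + (eta k + \<beta> / 2 * (norm (A *v x (Suc k) - b))\<^sup>2)" for k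
    using dual_gap_step[OF x_in approx_min update, of lamstar k] by (simp add: diff_divide_distrib)
  show "0 \<le> d lamstar - d (lam k)" for k
    using lamstar_opt[of "lam k"] by simp
  show "- (norm (lamstar - lam k))\<^sup>2 / (2 * \<beta>) \<le> 0" for k
    using beta_pos by simp
  show "0 \<le> eta k + \<beta> / 2 * (norm (A *v x (Suc k) - b))\<^sup>2" for k
    using beta_pos eta_nonneg[of k] by simp
  show "summable (\<lambda>k. eta k + \<beta> / 2 * (norm (A *v x (Suc k) - b))\<^sup>2)"
    using eta_summable residual_summable by (intro summable_add summable_mult)
qed

end

end

theorem theorem1:
  fixes f :: "real^'n \<Rightarrow> real" and Df :: "real^'n \<Rightarrow> real^'n"
    and g :: "real^'n \<Rightarrow> real" and D :: "(real^'n) set"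
    and A :: "real^'n^'m" and b :: "real^'m" and \<beta> :: real
    and x :: "nat \<Rightarrow> real^'n" and lam :: "nat \<Rightarrow> real^'m" and eta :: "nat \<Rightarrow> real"
    and lamstar :: "real^'m"
  assumes f_convex: "convex_on UNIV f"
    and f_grad: "\<And>z. (f has_derivative (\<lambda>h. Df z \<bullet> h)) (at z)"
    and f_lip: "\<exists>L. \<forall>y z. norm (Df y - Df z) \<le> L * norm (y - z)"
    and g_cpc: "closed_proper_convex D g"
    and D_bdd: "bounded D"
    and beta_pos: "\<beta> > 0"
    and lamstar_opt: "\<And>l. dual_fun f g D A b \<beta> l \<le> dual_fun f g D A b \<beta> lamstar"
    and x1: "x 1 \<in> D"
    and eta_nonneg: "\<And>k. eta k \<ge> 0"
    and eta_sum: "summable eta"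
    and x_step: "\<And>k. k \<ge> 1 \<Longrightarrow> x (Suc k) \<in> D \<and>
        (\<forall>z\<in>D. fhat_grad Df A b \<beta> (lam k) (x (Suc k)) \<bullet> (x (Suc k) - z)
                 + g (x (Suc k)) - g z \<le> eta k)"
    and lam_step: "\<And>k. k \<ge> 1 \<Longrightarrow> lam (Suc k) = lam k + \<beta> *\<^sub>R (A *v x (Suc k) - b)"
  shows "(\<lambda>k. dual_fun f g D A b \<beta> lamstar - dual_fun f g D A b \<beta> (lam k)) \<longlonglongrightarrow> 0
       \<and> (\<lambda>k. norm (A *v x (Suc k) - b)) \<longlonglongrightarrow> 0"
proof -
  interpret ial_setting f Df g D A b \<beta>
    using f_convex f_grad beta_pos by unfold_locales
  have step: "x (Suc (Suc k)) \<in> D"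
    "\<And>z. z \<in> D \<Longrightarrow> lagrangian (lam (Suc (Suc k))) (x (Suc (Suc k)))
        \<le> lagrangian (lam (Suc (Suc k))) z + eta (Suc k)"
    "lam (Suc (Suc k)) = lam (Suc k) + \<beta> *\<^sub>R (A *v x (Suc (Suc k)) - b)" for k
    using x_step[of "Suc k"] lam_step[of "Suc k"] by (auto intro: ial_step_approx_minimizer)
  have eta_shift: "summable (\<lambda>k. eta (Suc k))"
    using eta_sum by (simp add: summable_Suc_iff)
  note shifted = step eta_nonneg eta_shift lamstar_opt
  have "summable (\<lambda>k. (norm (A *v x (Suc (Suc k)) - b))\<^sup>2)"
    by (rule residual_summable[where x = "\<lambda>k. x (Suc k)" and lam = "\<lambda>k. lam (Suc k)", OF shifted])
  then have "(\<lambda>k. sqrt ((norm (A *v x (Suc (Suc k)) - b))\<^sup>2)) \<longlonglongrightarrow> sqrt 0"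
    by (intro tendsto_real_sqrt summable_LIMSEQ_zero)
  then have "(\<lambda>k. norm (A *v x (Suc (Suc k)) - b)) \<longlonglongrightarrow> 0"
    by simp
  then have residual: "(\<lambda>k. norm (A *v x (Suc k) - b)) \<longlonglongrightarrow> 0"
    by (rule LIMSEQ_imp_Suc)
  have "(\<lambda>k. d lamstar - d (lam (Suc k))) \<longlonglongrightarrow> 0"
    by (intro summable_LIMSEQ_zero
        dual_gap_summable[where x = "\<lambda>k. x (Suc k)" and lam = "\<lambda>k. lam (Suc k)", OF shifted])
  then have "(\<lambda>k. d lamstar - d (lam k)) \<longlonglongrightarrow> 0"
    by (rule LIMSEQ_imp_Suc)
  with residual show ?thesis by simp
qed

end
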